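(* Let $M>0$, $0<\delta\le+\infty$, and $\zeta:(0,\delta)\to(0,\infty)$ with $\lim_{\lambda\to0}\zeta(\lambda)/\lambda=0$. Let $(u_n)_{n\ge0}$ be nonnegative numbers with $u_0\le M$ and $$u_{n+1}\le(1-\lambda)u_n+M\zeta(\lambda)\qquad\text{for all }n\ge0\text{ and all }\lambda\in(0,\delta).$$ Define $\zeta^*(u):=\sup_{\lambda\in(0,\delta)}(\lambda u-\zeta(\lambda))\in(-\infty,+\infty]$, $F(u):=\int_u^1\frac{dv}{\zeta^*(v)}$ for $u\in(0,1]$ (with $1/\zeta^*(v):=0$ when $\zeta^*(v)=+\infty$), and $F^{-1}(t):=\inf\{u\in(0,1]:F(u)\le t\}$. Then $u_n\le M\,F^{-1}(n)$ for all integers $n\ge0$. *)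

theory Defs
  imports "HOL-Analysis.Analysis"
begin

definition lam_dom :: "ereal \<Rightarrow> real set" where
  "lam_dom \<delta> = {l::real. 0 < l \<and> ereal l < \<delta>}"

definition zeta_star :: "ereal \<Rightarrow> (real \<Rightarrow> real) \<Rightarrow> real \<Rightarrow> ereal" where
  "zeta_star \<delta> \<zeta> u = (SUP l\<in>lam_dom \<delta>. ereal (l * u - \<zeta> l))"

definition inv_zeta_star :: "ereal \<Rightarrow> (real \<Rightarrow> real) \<Rightarrow> real \<Rightarrow> real" where
  "inv_zeta_star \<delta> \<zeta> v =
     (if zeta_star \<delta> \<zeta> v = \<infinity> then 0 else 1 / real_of_ereal (zeta_star \<delta> \<zeta> v))"

definition F_fun :: "ereal \<Rightarrow> (real \<Rightarrow> real) \<Rightarrow> real \<Rightarrow> real" where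
  "F_fun \<delta> \<zeta> u = integral {u..1} (inv_zeta_star \<delta> \<zeta>)"

definition F_inv :: "ereal \<Rightarrow> (real \<Rightarrow> real) \<Rightarrow> real \<Rightarrow> real" where
  "F_inv \<delta> \<zeta> t = Inf {u. 0 < u \<and> u \<le> 1 \<and> F_fun \<delta> \<zeta> u \<le> t}"

end

theory Submission
  imports Defs
begin

text \<open>
  Normalise to \<open>M = 1\<close>. Taking the supremum over \<open>\<lambda>\<close> in the recursion gives
  \<open>\<zeta>\<^sup>*(u\<^sub>n) \<le> u\<^sub>n - u\<^sub>n\<^sub>+\<^sub>1\<close>, and \<open>\<zeta>\<^sup>*(u) > 0\<close> for \<open>u > 0\<close> because \<open>\<zeta>(\<lambda>) = o(\<lambda>)\<close>.
  So the sequence decreases, and since \<open>1/\<zeta>\<^sup>*\<close> is antitone,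
  \<open>F(u\<^sub>n\<^sub>+\<^sub>1) - F(u\<^sub>n) \<ge> (u\<^sub>n - u\<^sub>n\<^sub>+\<^sub>1) / \<zeta>\<^sup>*(u\<^sub>n) \<ge> 1\<close>, whence \<open>F(u\<^sub>n) \<ge> n\<close>.
  As \<open>F\<close> is strictly decreasing below \<open>u\<^sub>n\<close>, every \<open>u\<close> with \<open>F(u) \<le> n\<close> is at least \<open>u\<^sub>n\<close>.
\<close>

lemma zeta_star_mono:
  assumes "v \<le> w"
  shows "zeta_star \<delta> \<zeta> v \<le> zeta_star \<delta> \<zeta> w"
  unfolding zeta_star_def lam_dom_def
  by (rule SUP_mono) (use assms in \<open>auto intro!: mult_left_mono\<close>)

lemma zeta_star_le_decrement:
  assumes "\<And>l. l \<in> lam_dom \<delta> \<Longrightarrow> y \<le> (1 - l) * x + \<zeta> l"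
  shows "zeta_star \<delta> \<zeta> x \<le> ereal (x - y)"
  unfolding zeta_star_def
proof (rule SUP_least)
  fix l assume "l \<in> lam_dom \<delta>"
  then show "ereal (l * x - \<zeta> l) \<le> ereal (x - y)"
    using assms by (simp add: algebra_simps)
qed

lemma inv_zeta_star_ge_inverse:
  assumes "0 < zeta_star \<delta> \<zeta> x" and "zeta_star \<delta> \<zeta> x \<le> ereal c"
  shows "1 / c \<le> inv_zeta_star \<delta> \<zeta> x"
  using assms unfolding inv_zeta_star_def
  by (cases "zeta_star \<delta> \<zeta> x") (auto simp: frac_le)

locale sublinear_rate =
  fixes \<delta> :: ereal and \<zeta> :: "real \<Rightarrow> real"
  assumes delta_pos: "0 < \<delta>"
    and zeta_over_lambda: "((\<lambda>l. \<zeta> l / l) \<longlongrightarrow> 0) (at_right 0)"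
begin

lemma exists_small_lambda:
  assumes "0 < w" and "0 < b"
  obtains l where "l \<in> lam_dom \<delta>" "l < b" "\<zeta> l < l * w"
proof -
  have "\<forall>\<^sub>F l in at_right 0. \<zeta> l / l < w"
    using order_tendstoD(2)[OF zeta_over_lambda \<open>0 < w\<close>] .
  then obtain c where "0 < c" and c: "\<And>l. 0 < l \<Longrightarrow> l < c \<Longrightarrow> \<zeta> l / l < w"
    unfolding eventually_at_right_field by auto
  obtain r :: real where "0 < r" "ereal r < \<delta>"
  proof (cases \<delta>)
    case (real d)
    then show ?thesis
      using that[of "d / 2"] delta_pos by auto
  qed (use delta_pos that[of 1] in auto)
  define l where "l = min (min (b / 2) (c / 2)) r"
  have "0 < l" "l < b" "l < c" "l \<le> r"
    using \<open>0 < r\<close> \<open>0 < c\<close> \<open>0 < b\<close> unfolding l_def by auto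
  moreover have "ereal l < \<delta>"
    using \<open>l \<le> r\<close> \<open>ereal r < \<delta>\<close> by (meson ereal_less_eq(3) order_le_less_trans)
  ultimately show ?thesis
    using c[of l] by (intro that) (auto simp: lam_dom_def divide_less_eq mult.commute)
qed

lemma zeta_star_pos:
  assumes "0 < v"
  shows "0 < zeta_star \<delta> \<zeta> v"
proof -
  obtain l where l: "l \<in> lam_dom \<delta>" "\<zeta> l < l * v"
    using exists_small_lambda[OF \<open>0 < v\<close> zero_less_one] by blast
  have "ereal 0 < ereal (l * v - \<zeta> l)"
    using l(2) by simp
  also have "\<dots> \<le> zeta_star \<delta> \<zeta> v"
    unfolding zeta_star_def using l(1) by (rule SUP_upper)
  finally show ?thesis
    by (simp add: zero_ereal_def)
qed

lemma inv_zeta_star_nonneg: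
  assumes "0 < v"
  shows "0 \<le> inv_zeta_star \<delta> \<zeta> v"
  using zeta_star_pos[OF assms] unfolding inv_zeta_star_def
  by (cases "zeta_star \<delta> \<zeta> v") auto

lemma inv_zeta_star_antimono:
  assumes "0 < v" and "v \<le> w"
  shows "inv_zeta_star \<delta> \<zeta> w \<le> inv_zeta_star \<delta> \<zeta> v"
proof (cases "zeta_star \<delta> \<zeta> w")
  case (real y)
  then have "zeta_star \<delta> \<zeta> v \<le> ereal y"
    using zeta_star_mono[OF \<open>v \<le> w\<close>] by metis
  then have "1 / y \<le> inv_zeta_star \<delta> \<zeta> v"
    by (rule inv_zeta_star_ge_inverse[OF zeta_star_pos[OF \<open>0 < v\<close>]])
  then show ?thesis
    using real by (simp add: inv_zeta_star_def)
next
  case PInf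
  then show ?thesis
    using inv_zeta_star_nonneg[OF \<open>0 < v\<close>] by (simp add: inv_zeta_star_def)
next
  case MInf
  then show ?thesis
    using zeta_star_pos[of w] assms by simp
qed

lemma inv_zeta_star_integrable:
  assumes "0 < a"
  shows "inv_zeta_star \<delta> \<zeta> integrable_on {a..b}"
proof -
  have "mono_on {a..b} (\<lambda>x. - inv_zeta_star \<delta> \<zeta> x)"
    unfolding mono_on_def using inv_zeta_star_antimono assms by force
  then have "(\<lambda>x. - inv_zeta_star \<delta> \<zeta> x) integrable_on {a..b}"
    by (rule integrable_on_mono_on)
  then show ?thesis
    using integrable_neg by fastforce
qed

lemma F_fun_nonneg:
  assumes "0 < x"
  shows "0 \<le> F_fun \<delta> \<zeta> x"
  unfolding F_fun_def
  by (rule integral_nonneg) (use inv_zeta_star_integrable inv_zeta_star_nonneg assms in auto)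

lemma F_fun_diff_ge:
  assumes "0 < a" "a \<le> b" "b \<le> 1"
  shows "F_fun \<delta> \<zeta> b + (b - a) * inv_zeta_star \<delta> \<zeta> b \<le> F_fun \<delta> \<zeta> a"
proof -
  have "(b - a) * inv_zeta_star \<delta> \<zeta> b = integral {a..b} (\<lambda>x. inv_zeta_star \<delta> \<zeta> b)"
    using \<open>a \<le> b\<close> by simp
  also have "\<dots> \<le> integral {a..b} (inv_zeta_star \<delta> \<zeta>)"
    by (rule integral_le) (use inv_zeta_star_integrable inv_zeta_star_antimono \<open>0 < a\<close> in auto)
  also have "\<dots> = F_fun \<delta> \<zeta> a - F_fun \<delta> \<zeta> b"
    unfolding F_fun_def
    using Henstock_Kurzweil_Integration.integral_combine[OF \<open>a \<le> b\<close> \<open>b \<le> 1\<close>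
        inv_zeta_star_integrable[OF \<open>0 < a\<close>]]
    by simp
  finally show ?thesis
    by simp
qed

lemma F_fun_increment:
  assumes "0 < y" "y \<le> x" "x \<le> 1" and "zeta_star \<delta> \<zeta> x \<le> ereal (x - y)"
  shows "F_fun \<delta> \<zeta> x + 1 \<le> F_fun \<delta> \<zeta> y"
proof -
  have "0 < zeta_star \<delta> \<zeta> x"
    using zeta_star_pos assms by simp
  have "0 < x - y"
    using less_le_trans[OF \<open>0 < zeta_star \<delta> \<zeta> x\<close> assms(4)] by simp
  have "1 = (x - y) * (1 / (x - y))"
    using \<open>0 < x - y\<close> by simp
  also have "\<dots> \<le> (x - y) * inv_zeta_star \<delta> \<zeta> x"
    using inv_zeta_star_ge_inverse[OF \<open>0 < zeta_star \<delta> \<zeta> x\<close> assms(4)] \<open>0 < x - y\<close>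
    by (rule mult_left_mono[OF _ less_imp_le])
  finally show ?thesis
    using F_fun_diff_ge[OF assms(1-3)] by linarith
qed

lemma F_fun_strict_antimono:
  assumes "0 < w" "w < x" "x \<le> 1" and "zeta_star \<delta> \<zeta> x < \<infinity>"
  shows "F_fun \<delta> \<zeta> x < F_fun \<delta> \<zeta> w"
proof -
  obtain c where c: "zeta_star \<delta> \<zeta> x = ereal c"
    using assms(4) zeta_star_pos[of x] assms(1,2) by (cases "zeta_star \<delta> \<zeta> x") auto
  have pos: "0 < zeta_star \<delta> \<zeta> x"
    using zeta_star_pos assms(1,2) by simp
  with c have "0 < 1 / c"
    by simp
  also have "\<dots> \<le> inv_zeta_star \<delta> \<zeta> x"
    using inv_zeta_star_ge_inverse[OF pos] c by simp
  finally have "0 < (x - w) * inv_zeta_star \<delta> \<zeta> x"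
    using assms(2) by simp
  then show ?thesis
    using F_fun_diff_ge[OF assms(1) less_imp_le[OF assms(2)] assms(3)] by linarith
qed

lemma F_inv_nonneg:
  assumes "0 \<le> t"
  shows "0 \<le> F_inv \<delta> \<zeta> t"
  unfolding F_inv_def
  by (rule cInf_greatest) (use assms in \<open>auto simp: F_fun_def intro!: exI[of _ 1]\<close>)

lemma le_F_inv:
  assumes "0 < x" "x \<le> 1" "zeta_star \<delta> \<zeta> x < \<infinity>" and "0 \<le> t" "t \<le> F_fun \<delta> \<zeta> x"
  shows "x \<le> F_inv \<delta> \<zeta> t"
  unfolding F_inv_def
proof (rule cInf_greatest)
  show "{u. 0 < u \<and> u \<le> 1 \<and> F_fun \<delta> \<zeta> u \<le> t} \<noteq> {}"
    using \<open>0 \<le> t\<close> by (auto simp: F_fun_def intro!: exI[of _ 1])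
  fix w assume w: "w \<in> {u. 0 < u \<and> u \<le> 1 \<and> F_fun \<delta> \<zeta> u \<le> t}"
  show "x \<le> w"
  proof (rule ccontr)
    assume "\<not> x \<le> w"
    then have "F_fun \<delta> \<zeta> x < F_fun \<delta> \<zeta> w"
      using F_fun_strict_antimono assms(2,3) w by simp
    then show False
      using w assms(5) by simp
  qed
qed

lemma recursion_step_le:
  assumes "0 \<le> x" "0 \<le> y" and rec: "\<And>l. l \<in> lam_dom \<delta> \<Longrightarrow> y \<le> (1 - l) * x + \<zeta> l"
  shows "y \<le> x"
proof (cases "x = 0")
  case True
  show ?thesis
  proof (rule ccontr)
    assume "\<not> y \<le> x"
    then obtain l where "l \<in> lam_dom \<delta>" "l < y" "\<zeta> l < l"
      using exists_small_lambda[of 1 y] True by auto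
    then show False
      using rec True by fastforce
  qed
next
  case False
  have "zeta_star \<delta> \<zeta> x \<le> ereal (x - y)"
    using rec by (rule zeta_star_le_decrement)
  moreover have "0 < zeta_star \<delta> \<zeta> x"
    using zeta_star_pos False \<open>0 \<le> x\<close> by simp
  ultimately have "0 < x - y"
    using less_le_trans by fastforce
  then show ?thesis
    by simp
qed

lemma recursion_le_F_inv:
  fixes v :: "nat \<Rightarrow> real"
  assumes nonneg: "\<And>n. 0 \<le> v n" and "v 0 \<le> 1"
    and rec: "\<And>n l. l \<in> lam_dom \<delta> \<Longrightarrow> v (Suc n) \<le> (1 - l) * v n + \<zeta> l"
  shows "v n \<le> F_inv \<delta> \<zeta> (real n)"
proof -
  have decrement: "zeta_star \<delta> \<zeta> (v n) \<le> ereal (v n - v (Suc n))" for n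
    using rec by (rule zeta_star_le_decrement)
  have antitone: "v (Suc n) \<le> v n" for n
    using nonneg nonneg rec by (rule recursion_step_le)
  have le_one: "v n \<le> 1" for n
    by (induction n) (use \<open>v 0 \<le> 1\<close> antitone order_trans in blast)+
  have F_ge: "real n \<le> F_fun \<delta> \<zeta> (v n)" if "0 < v n" for n
    using that
  proof (induction n)
    case 0
    then show ?case
      using F_fun_nonneg by simp
  next
    case (Suc n)
    then have "0 < v n"
      using antitone[of n] by linarith
    then have "real n + 1 \<le> F_fun \<delta> \<zeta> (v (Suc n))"
      using Suc.IH F_fun_increment[OF Suc.prems antitone le_one decrement] by simp
    then show ?case
      by simp
  qed
  show ?thesis
  proof (cases "v n = 0")
    case True
    then show ?thesis
      using F_inv_nonneg by simp
  next
    case False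
    then have pos: "0 < v n"
      using nonneg[of n] by simp
    have finite: "zeta_star \<delta> \<zeta> (v n) < \<infinity>"
      by (rule le_less_trans[OF decrement]) simp
    show ?thesis
      by (rule le_F_inv[OF pos le_one finite of_nat_0_le_iff F_ge[OF pos]])
  qed
qed

end

theorem lemma4p11:
  fixes M :: real and \<delta> :: ereal and \<zeta> :: "real \<Rightarrow> real" and u :: "nat \<Rightarrow> real"
  assumes "M > 0"
    and "0 < \<delta>"
    and "\<And>l. l \<in> lam_dom \<delta> \<Longrightarrow> \<zeta> l > 0"
    and "((\<lambda>l. \<zeta> l / l) \<longlongrightarrow> 0) (at_right 0)"
    and "\<And>n. u n \<ge> 0"
    and "u 0 \<le> M"
    and "\<And>n l. l \<in> lam_dom \<delta> \<Longrightarrow> u (Suc n) \<le> (1 - l) * u n + M * \<zeta> l"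
  shows "\<forall>n. u n \<le> M * F_inv \<delta> \<zeta> (real n)"
proof
  fix n
  interpret sublinear_rate \<delta> \<zeta>
    using assms(2,4) by unfold_locales
  have "u n / M \<le> F_inv \<delta> \<zeta> (real n)"
  proof (rule recursion_le_F_inv[where v = "\<lambda>n. u n / M"])
    fix m l assume "l \<in> lam_dom \<delta>"
    then have "u (Suc m) / M \<le> ((1 - l) * u m + M * \<zeta> l) / M"
      using assms(1,7) by (simp add: divide_right_mono)
    then show "u (Suc m) / M \<le> (1 - l) * (u m / M) + \<zeta> l"
      using assms(1) by (simp add: add_divide_distrib)
  qed (use assms(1,5,6) in simp_all)
  then show "u n \<le> M * F_inv \<delta> \<zeta> (real n)"
    using assms(1) by (simp add: pos_divide_le_eq mult.commute)
qed

end
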